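(* Let $A=[1,1,\dots,1]\in\mathbb R^{1\times N}$, $\vec w\in\mathbb R^N$ with $\sum_{i=1}^N w_i>0$, $b=A\vec w$, and let $(\vec x,(\lambda_i)_{i=1}^N,\gamma)$ satisfy the KKT conditions $x_i-w_i+\gamma-\lambda_i=0$, $\lambda_ix_i=0$, $\lambda_i\ge0$, $x_i\ge0$ ($i=1,\dots,N$), $\sum_{i=1}^Nx_i=b$ of the problem $\min_{\vec x\in\mathbb R^N}\frac12\|\vec x-\vec w\|_2^2$ subject to $A\vec x=b$, $x_i\ge0$. Let $B=\{j:x_j=0\}$ and let $\#B$ be its cardinality. Then: (i) for all $i\in B$ (i.e. $x_i=0$), $\lambda_i-\frac1N\sum_{j\in B}\lambda_j=-w_i$; (ii) for all $i$ with $x_i>0$, $x_i=w_i+\frac{1}{N-\#B}\sum_{j\in B}w_j$. *)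

theory Defs
  imports Complex_Main
begin

end

theory Submission
  imports Defs
begin

text \<open>Summing the stationarity conditions over all indices and using feasibility gives
  \<open>N \<gamma> = \<Sum>\<^sub>i \<lambda>\<^sub>i\<close>, where by complementary slackness only the active indices
  \<open>B\<close> contribute. On \<open>B\<close> stationarity reads \<open>\<lambda>\<^sub>i = \<gamma> - w\<^sub>i\<close>, which gives (i) and,
  summed over \<open>B\<close>, \<open>(N - #B) \<gamma> = - \<Sum>\<^sub>j\<^sub>\<in>\<^sub>B w\<^sub>j\<close>; off \<open>B\<close> the multipliers vanish, so
  \<open>x\<^sub>i = w\<^sub>i - \<gamma>\<close>, which is (ii).\<close>

lemma kkt_card_mult_eq_sum_active_multipliers:
  fixes w x lambda :: "'a \<Rightarrow> real"
  assumes "finite I"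
    and stat: "\<forall>i\<in>I. x i - w i + gamma - lambda i = 0"
    and compl: "\<forall>i\<in>I. lambda i * x i = 0"
    and feas: "sum x I = sum w I"
  shows "real (card I) * gamma = (\<Sum>j\<in>{j\<in>I. x j = 0}. lambda j)"
proof -
  have "sum x I - sum w I + real (card I) * gamma - sum lambda I
      = (\<Sum>i\<in>I. x i - w i + gamma - lambda i)"
    by (simp add: sum.distrib sum_subtractf)
  also have "\<dots> = 0"
    using stat by simp
  finally have "real (card I) * gamma = sum lambda I"
    using feas by simp
  also have "\<dots> = (\<Sum>j\<in>{j\<in>I. x j = 0}. lambda j)"
    using \<open>finite I\<close> compl by (intro sum.mono_neutral_right) auto
  finally show ?thesis .
qed

lemma kkt_card_inactive_mult_eq_neg_sum_active:
  fixes w x lambda :: "'a \<Rightarrow> real"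
  assumes "finite I"
    and stat: "\<forall>i\<in>I. x i - w i + gamma - lambda i = 0"
    and compl: "\<forall>i\<in>I. lambda i * x i = 0"
    and feas: "sum x I = sum w I"
  shows "(real (card I) - real (card {j\<in>I. x j = 0})) * gamma
           = - (\<Sum>j\<in>{j\<in>I. x j = 0}. w j)"
proof -
  let ?B = "{j\<in>I. x j = 0}"
  have "real (card I) * gamma = (\<Sum>j\<in>?B. lambda j)"
    using kkt_card_mult_eq_sum_active_multipliers assms by blast
  also have "\<dots> = (\<Sum>j\<in>?B. gamma - w j)"
    using stat by (intro sum.cong) auto
  also have "\<dots> = real (card ?B) * gamma - (\<Sum>j\<in>?B. w j)"
    by (simp add: sum_subtractf)
  finally show ?thesis
    by (simp add: left_diff_distrib)
qed

theorem lemma3: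
  fixes N :: nat and w x lambda :: "nat \<Rightarrow> real" and gamma b :: real
  assumes wpos: "(\<Sum>i=1..N. w i) > 0"
    and b_def: "b = (\<Sum>i=1..N. w i)"
    and stat: "\<forall>i\<in>{1..N}. x i - w i + gamma - lambda i = 0"
    and compl: "\<forall>i\<in>{1..N}. lambda i * x i = 0"
    and lam_nonneg: "\<forall>i\<in>{1..N}. lambda i \<ge> 0"
    and x_nonneg: "\<forall>i\<in>{1..N}. x i \<ge> 0"
    and feas: "(\<Sum>i=1..N. x i) = b"
  defines "B \<equiv> {j\<in>{1..N}. x j = 0}"
  shows "(\<forall>i\<in>B. lambda i - (1 / real N) * (\<Sum>j\<in>B. lambda j) = - w i)
       \<and> (\<forall>i\<in>{1..N}. x i > 0 \<longrightarrow>
            x i = w i + (1 / (real N - real (card B))) * (\<Sum>j\<in>B. w j))"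
proof (intro conjI ballI impI)
  have sum_eq: "sum x {1..N} = sum w {1..N}"
    using feas b_def by simp
  have N_gamma: "real N * gamma = (\<Sum>j\<in>B. lambda j)"
    using kkt_card_mult_eq_sum_active_multipliers[OF _ stat compl sum_eq] B_def by simp
  have card_gamma: "(real N - real (card B)) * gamma = - (\<Sum>j\<in>B. w j)"
    using kkt_card_inactive_mult_eq_neg_sum_active[OF _ stat compl sum_eq] B_def by simp
  show "lambda i - (1 / real N) * (\<Sum>j\<in>B. lambda j) = - w i" if "i \<in> B" for i
  proof -
    from that have i: "i \<in> {1..N}" "x i = 0" and "N > 0"
      unfolding B_def by auto
    have "lambda i = gamma - w i"
      using bspec[OF stat i(1)] i(2) by simp
    moreover have "gamma = (1 / real N) * (\<Sum>j\<in>B. lambda j)"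
      using N_gamma \<open>N > 0\<close> by (simp add: field_simps)
    ultimately show ?thesis
      by simp
  qed
  show "x i = w i + (1 / (real N - real (card B))) * (\<Sum>j\<in>B. w j)"
    if i: "i \<in> {1..N}" "x i > 0" for i
  proof -
    have "B \<subseteq> {1..N}" "i \<notin> B"
      using i unfolding B_def by auto
    then have "card B < N"
      using psubset_card_mono[of "{1..N}" B] i(1) by fastforce
    then have "gamma = - (1 / (real N - real (card B))) * (\<Sum>j\<in>B. w j)"
      using card_gamma by (simp add: field_simps)
    moreover have "lambda i = 0"
      using compl i by auto
    ultimately show ?thesis
      using bspec[OF stat i(1)] by simp
  qed
qed

end
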